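(* Let $\mathcal{D}=\{D_1,\ldots,D_N\}$ be a finite set of closed disks in the plane, $D_i$ having center $c_i$ and radius $\rho_i\ge 0$, and consider its Apollonius diagram. Let $p$ and $q$ be two points on an Apollonius edge of the cell $A_i$ of $D_i$, and let $\gamma$ be the arc of that edge between $p$ and $q$. Then $\gamma$ is contained in the smallest closed disk with center $c_i$ that contains $p$ and $q$, i.e. the closed disk of center $c_i$ and radius $\max(\|p-c_i\|,\|q-c_i\|)$.
   Context: For a point $x\in\mathbb{R}^2$, $\delta_i(x)=\|x-c_i\|-\rho_i$ (Euclidean norm). The Apollonius cell of $D_i$ is $A_i=\{x\in\mathbb{R}^2 \mid \delta_i(x)\le\delta_j(x),\ j=1,\ldots,N\}$. The one-dimensional connected sets of points belonging to exactly two Apollonius cells are the Apollonius edges; points belonging to at least three cells are the Apollonius vertices. The bisector of $D_i,D_j$ is $B_{ij}=\{x\mid \delta_i(x)=\delta_j(x)\}$, so each edge of $A_i$ lies on a bisector $B_{ij}$. *)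

theory Defs
  imports "HOL-Analysis.Analysis"
begin

text \<open>The plane is modelled as the type complex (Euclidean norm).
  A closed disk is a pair (centre, radius); a finite family of disks is a
  finite set of such pairs.\<close>

type_synonym disk = "complex \<times> real"

definition delta :: "disk \<Rightarrow> complex \<Rightarrow> real" where
  "delta D x = norm (x - fst D) - snd D"

definition apollonius_cell :: "disk set \<Rightarrow> disk \<Rightarrow> complex set" where
  "apollonius_cell \<D> D = {x. \<forall>D'\<in>\<D>. delta D x \<le> delta D' x}"

definition cells_containing :: "disk set \<Rightarrow> complex \<Rightarrow> disk set" where
  "cells_containing \<D> x = {D\<in>\<D>. x \<in> apollonius_cell \<D> D}"

definition two_cell_points :: "disk set \<Rightarrow> complex set" where
  "two_cell_points \<D> = {x. card (cells_containing \<D> x) = 2}"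

definition apollonius_edge :: "disk set \<Rightarrow> complex set \<Rightarrow> bool" where
  "apollonius_edge \<D> E \<longleftrightarrow> E \<in> components (two_cell_points \<D>)"

end

theory Submission
  imports Defs
begin

text \<open>
  A point of the edge lies on the bisector B_ij of D_i and the other disk D_j whose cell
  contains it exactly when D_i is strictly closer than every disk other than D_i and D_j.
  This is an open condition, so by connectedness the whole edge lies on one bisector B_ij.
  In coordinates centred at c_i with first axis towards c_j, the abscissa of a
  point of B_ij is an affine function of its distance r to c_i (the polar equation of
  a hyperbola branch).  So the ordinate is injective on B_ij and its modulus is strictly
  increasing in r.  An injective continuous real function along an arc stays between
  its values at the ends, so the modulus of the ordinate, and with it r, is maximal at
  p or q.  When |\<rho>_i - \<rho>_j| = |c_i - c_j| the bisector is a ray and r itself is injective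
  on it.
\<close>

lemma arc_image_between_ends:
  fixes f :: "'a::topological_space \<Rightarrow> real"
  assumes "arc \<gamma>" "continuous_on (path_image \<gamma>) f" "inj_on f (path_image \<gamma>)"
    and "x \<in> path_image \<gamma>"
  shows "f x \<in> closed_segment (f (pathstart \<gamma>)) (f (pathfinish \<gamma>))"
proof -
  obtain t where t: "t \<in> {0..1}" "x = \<gamma> t"
    using assms(4) unfolding path_image_def by auto
  have cont: "continuous_on {0..1} (f \<circ> \<gamma>)"
    using assms(1,2) arc_imp_path unfolding path_def path_image_def
    by (blast intro: continuous_on_compose)
  have inj: "inj_on (f \<circ> \<gamma>) {0..1}"
    using assms(1,3) arc_imp_inj_on unfolding path_image_def by (blast intro: comp_inj_on)
  show ?thesis
  proof (cases "t = 0 \<or> t = 1")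
    case True
    then show ?thesis using t by (auto simp: pathstart_def pathfinish_def)
  next
    case False
    then have "0 < t" "t < 1" using t by auto
    from continuous_inj_imp_mono[OF this cont inj] show ?thesis
      using t by (auto simp: closed_segment_eq_real_ivl pathstart_def pathfinish_def)
  qed
qed

(* {u. norm (u - v) = norm u - d} is the bisector of two disks with centres 0 and v whose
   radii differ by d; Re (u * cnj v) and Im (u * cnj v) are norm v times the coordinates
   of u along and across v. *)

lemma re_mult_cnj_on_branch:
  fixes u v :: complex and d :: real
  assumes "norm (u - v) = norm u - d"
  shows "Re (u * cnj v) = norm u * d + ((norm v)\<^sup>2 - d\<^sup>2) / 2"
proof -
  have "(norm u - d)\<^sup>2 = (norm u)\<^sup>2 - 2 * Re (u * cnj v) + (norm v)\<^sup>2"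
    unfolding assms[symmetric] cmod_power2 by (simp add: power2_eq_square algebra_simps)
  then show ?thesis by (simp add: power2_eq_square field_simps)
qed

lemma branch_height_sq_strict_mono:
  fixes L d r r' :: real
  assumes "\<bar>d\<bar> < L" "0 \<le> r'" "d \<le> r'" "r' < r"
  shows "(r' * L)\<^sup>2 - (r' * d + (L\<^sup>2 - d\<^sup>2) / 2)\<^sup>2 < (r * L)\<^sup>2 - (r * d + (L\<^sup>2 - d\<^sup>2) / 2)\<^sup>2"
proof -
  have "d\<^sup>2 < L\<^sup>2"
    using assms(1) by (metis abs_le_square_iff abs_of_pos abs_ge_zero le_less_trans not_le)
  then have "0 < (r - r') * (L\<^sup>2 - d\<^sup>2) * (r + r' - d)"
    using assms(2-4) by simp
  also have "\<dots> = (r * L)\<^sup>2 - (r * d + (L\<^sup>2 - d\<^sup>2) / 2)\<^sup>2 - ((r' * L)\<^sup>2 - (r' * d + (L\<^sup>2 - d\<^sup>2) / 2)\<^sup>2)"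
    by (simp add: power2_eq_square field_simps)
  finally show ?thesis by simp
qed

lemma branch_height_inj_mono:
  fixes v :: complex and d :: real
  assumes "\<bar>d\<bar> < norm v"
  defines "H \<equiv> {u. norm (u - v) = norm u - d}"
  shows "inj_on (\<lambda>u. Im (u * cnj v)) H"
    and "\<And>u u'. u \<in> H \<Longrightarrow> u' \<in> H \<Longrightarrow> \<bar>Im (u * cnj v)\<bar> \<le> \<bar>Im (u' * cnj v)\<bar> \<Longrightarrow> norm u \<le> norm u'"
proof -
  define k where "k = ((norm v)\<^sup>2 - d\<^sup>2) / 2"
  have re: "Re (u * cnj v) = norm u * d + k" if "u \<in> H" for u
    using re_mult_cnj_on_branch that unfolding H_def k_def by blast
  have im_sq: "(Im (u * cnj v))\<^sup>2 = (norm u * norm v)\<^sup>2 - (norm u * d + k)\<^sup>2" if "u \<in> H" for u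
    using cmod_power2[of "u * cnj v"] re[OF that] by (simp add: norm_mult)
  have strict: "\<bar>Im (u' * cnj v)\<bar> < \<bar>Im (u * cnj v)\<bar>"
    if "u \<in> H" "u' \<in> H" "norm u' < norm u" for u u'
  proof -
    have "d \<le> norm u'" using that(2) norm_ge_zero[of "u' - v"] unfolding H_def by simp
    from branch_height_sq_strict_mono[OF assms(1) norm_ge_zero this that(3)]
    have "(Im (u' * cnj v))\<^sup>2 < (Im (u * cnj v))\<^sup>2"
      using im_sq[OF that(1)] im_sq[OF that(2)] unfolding k_def by linarith
    then show ?thesis using abs_le_square_iff[of "Im (u * cnj v)" "Im (u' * cnj v)"] by linarith
  qed
  show "norm u \<le> norm u'" if "u \<in> H" "u' \<in> H" "\<bar>Im (u * cnj v)\<bar> \<le> \<bar>Im (u' * cnj v)\<bar>" for u u'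
    by (rule ccontr) (use strict[of u u'] that in auto)
  show "inj_on (\<lambda>u. Im (u * cnj v)) H"
  proof (rule inj_onI)
    fix u u' assume u: "u \<in> H" "u' \<in> H" "Im (u * cnj v) = Im (u' * cnj v)"
    then have "norm u = norm u'"
      using strict[of u u'] strict[of u' u] u(3)
      by (cases "norm u" "norm u'" rule: linorder_cases) auto
    then have "u * cnj v = u' * cnj v" using re u by (simp add: complex_eq_iff)
    moreover have "v \<noteq> 0" using assms(1) by auto
    ultimately show "u = u'" by simp
  qed
qed

lemma degenerate_branch_inj_norm:
  fixes v :: complex and d :: real
  assumes "v \<noteq> 0" "norm v \<le> \<bar>d\<bar>"
  shows "inj_on norm {u. norm (u - v) = norm u - d}"
proof -
  have on_ray: "u * cnj v = complex_of_real (norm u * d)" if u: "norm (u - v) = norm u - d" for u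
  proof -
    have "\<bar>d\<bar> \<le> norm v" using norm_triangle_ineq3[of u "u - v"] u by simp
    then have dv: "\<bar>d\<bar> = norm v" using assms(2) by simp
    then have "(norm v)\<^sup>2 = d\<^sup>2" by (metis power2_abs)
    then have re: "Re (u * cnj v) = norm u * d" using re_mult_cnj_on_branch[OF u] by simp
    have "(Re (u * cnj v))\<^sup>2 + (Im (u * cnj v))\<^sup>2 = (norm u * \<bar>d\<bar>)\<^sup>2"
      unfolding cmod_power2[symmetric] dv by (simp add: norm_mult)
    then have "Im (u * cnj v) = 0" unfolding re by (simp add: power_mult_distrib)
    with re show ?thesis by (simp add: complex_eq_iff)
  qed
  show ?thesis
  proof (rule inj_onI)
    fix u u' assume "u \<in> {u. norm (u - v) = norm u - d}" "u' \<in> {u. norm (u - v) = norm u - d}"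
      and "norm u = norm u'"
    then have "u * cnj v = u' * cnj v" using on_ray by simp
    with assms(1) show "u = u'" by simp
  qed
qed

lemma continuous_on_delta: "continuous_on S (delta D)"
  unfolding delta_def by (intro continuous_intros)

definition bisector :: "disk \<Rightarrow> disk \<Rightarrow> complex set" where
  "bisector D D' = {x. delta D x = delta D' x}"

lemma bisector_monotone_coordinate:
  assumes "D \<noteq> Di"
  obtains f :: "complex \<Rightarrow> real"
  where "continuous_on UNIV f" "inj_on f (bisector Di D)"
    and "\<And>x y. x \<in> bisector Di D \<Longrightarrow> y \<in> bisector Di D \<Longrightarrow> \<bar>f x\<bar> \<le> \<bar>f y\<bar> \<Longrightarrow>
           norm (x - fst Di) \<le> norm (y - fst Di)"
proof -
  define c where "c = fst Di"
  define v where "v = fst D - c"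
  define d where "d = snd Di - snd D"
  define H where "H = {u. norm (u - v) = norm u - d}"
  have mem: "x \<in> bisector Di D \<longleftrightarrow> x - c \<in> H" for x
    unfolding bisector_def delta_def H_def c_def v_def d_def by (auto simp: algebra_simps)
  have translate: "inj_on (\<lambda>x. g (x - c)) (bisector Di D)" if "inj_on g H" for g
    using that mem unfolding inj_on_def by (metis diff_add_cancel)
  consider "v = 0" | "\<bar>d\<bar> < norm v" | "v \<noteq> 0" "norm v \<le> \<bar>d\<bar>" by fastforce
  then show ?thesis
  proof cases
    case 1
    have "bisector Di D = {}"
    proof -
      have "d \<noteq> 0" using assms 1 unfolding v_def d_def c_def by (auto simp: prod_eq_iff)
      then show ?thesis using 1 by (auto simp: mem H_def)
    qed
    show ?thesis by (rule that[of "\<lambda>_. 0"]) (simp_all add: \<open>bisector Di D = {}\<close>)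
  next
    case 2
    show ?thesis
    proof (rule that[of "\<lambda>x. Im ((x - c) * cnj v)"])
      show "continuous_on UNIV (\<lambda>x. Im ((x - c) * cnj v))" by (intro continuous_intros)
      show "inj_on (\<lambda>x. Im ((x - c) * cnj v)) (bisector Di D)"
        using translate branch_height_inj_mono(1)[OF 2] unfolding H_def by blast
      show "norm (x - fst Di) \<le> norm (y - fst Di)"
        if "x \<in> bisector Di D" "y \<in> bisector Di D" "\<bar>Im ((x - c) * cnj v)\<bar> \<le> \<bar>Im ((y - c) * cnj v)\<bar>"
        for x y
        using branch_height_inj_mono(2)[OF 2, of "x - c" "y - c"] that mem
        unfolding H_def c_def by blast
    qed
  next
    case 3
    show ?thesis
    proof (rule that[of "\<lambda>x. norm (x - c)"])
      show "continuous_on UNIV (\<lambda>x. norm (x - c))" by (intro continuous_intros)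
      show "inj_on (\<lambda>x. norm (x - c)) (bisector Di D)"
        using translate degenerate_branch_inj_norm[OF 3] unfolding H_def by blast
      show "norm (x - fst Di) \<le> norm (y - fst Di)"
        if "\<bar>norm (x - c)\<bar> \<le> \<bar>norm (y - c)\<bar>" for x y
        using that unfolding c_def by simp
    qed
  qed
qed

lemma arc_in_bisector_subset_cball:
  assumes "D \<noteq> Di" "arc \<gamma>" "path_image \<gamma> \<subseteq> bisector Di D"
  shows "path_image \<gamma> \<subseteq>
    cball (fst Di) (max (norm (pathstart \<gamma> - fst Di)) (norm (pathfinish \<gamma> - fst Di)))"
proof
  fix x assume x: "x \<in> path_image \<gamma>"
  obtain f :: "complex \<Rightarrow> real" where f: "continuous_on UNIV f" "inj_on f (bisector Di D)"
    and mono: "\<And>x y. x \<in> bisector Di D \<Longrightarrow> y \<in> bisector Di D \<Longrightarrow> \<bar>f x\<bar> \<le> \<bar>f y\<bar> \<Longrightarrow>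
                 norm (x - fst Di) \<le> norm (y - fst Di)"
    using bisector_monotone_coordinate[OF assms(1)] by blast
  have "f x \<in> closed_segment (f (pathstart \<gamma>)) (f (pathfinish \<gamma>))"
    using arc_image_between_ends[OF assms(2) _ _ x] f assms(3)
    by (meson continuous_on_subset inj_on_subset subset_UNIV)
  then have "\<bar>f x\<bar> \<le> \<bar>f (pathstart \<gamma>)\<bar> \<or> \<bar>f x\<bar> \<le> \<bar>f (pathfinish \<gamma>)\<bar>"
    by (auto simp: closed_segment_eq_real_ivl split: if_splits)
  moreover have "x \<in> bisector Di D" "pathstart \<gamma> \<in> bisector Di D" "pathfinish \<gamma> \<in> bisector Di D"
    using x assms(3) by auto
  ultimately have "norm (x - fst Di) \<le> norm (pathstart \<gamma> - fst Di) \<or>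
                   norm (x - fst Di) \<le> norm (pathfinish \<gamma> - fst Di)"
    using mono by blast
  then show "x \<in> cball (fst Di) (max (norm (pathstart \<gamma> - fst Di)) (norm (pathfinish \<gamma> - fst Di)))"
    by (auto simp: dist_commute dist_norm)
qed

lemma two_cell_point_in_bisector_iff:
  assumes "x \<in> two_cell_points \<D>" "x \<in> apollonius_cell \<D> Di" "Di \<in> \<D>" "D \<in> \<D>" "D \<noteq> Di"
  shows "x \<in> bisector Di D \<longleftrightarrow> (\<forall>D'\<in>\<D> - {Di, D}. delta Di x < delta D' x)"
proof
  assume "x \<in> bisector Di D"
  then have "{Di, D} \<subseteq> cells_containing \<D> x"
    using assms(2-4) unfolding bisector_def cells_containing_def apollonius_cell_def by auto
  moreover have "finite (cells_containing \<D> x)" "card (cells_containing \<D> x) = card {Di, D}"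
    using assms(1,5) card.infinite unfolding two_cell_points_def by fastforce+
  ultimately have cells: "cells_containing \<D> x = {Di, D}" by (metis card_subset_eq)
  show "\<forall>D'\<in>\<D> - {Di, D}. delta Di x < delta D' x"
  proof
    fix D' assume D': "D' \<in> \<D> - {Di, D}"
    then have "x \<notin> apollonius_cell \<D> D'" using cells unfolding cells_containing_def by auto
    then obtain D'' where "D'' \<in> \<D>" "delta D'' x < delta D' x"
      unfolding apollonius_cell_def by (auto simp: not_le)
    moreover have "delta Di x \<le> delta D'' x" using \<open>D'' \<in> \<D>\<close> assms(2) unfolding apollonius_cell_def by auto
    ultimately show "delta Di x < delta D' x" by simp
  qed
next
  assume closest: "\<forall>D'\<in>\<D> - {Di, D}. delta Di x < delta D' x"
  show "x \<in> bisector Di D"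
  proof (rule ccontr)
    assume "x \<notin> bisector Di D"
    then have "delta Di x < delta D x"
      using assms(2,4) unfolding bisector_def apollonius_cell_def by force
    have "cells_containing \<D> x \<subseteq> {Di}"
    proof
      fix D' assume D': "D' \<in> cells_containing \<D> x"
      then have "delta D' x \<le> delta Di x" "D' \<in> \<D>"
        using assms(3) unfolding cells_containing_def apollonius_cell_def by auto
      show "D' \<in> {Di}"
      proof (rule ccontr)
        assume "D' \<notin> {Di}"
        then have "delta Di x < delta D' x"
          using closest \<open>delta Di x < delta D x\<close> \<open>D' \<in> \<D>\<close> by (cases "D' = D") auto
        with \<open>delta D' x \<le> delta Di x\<close> show False by simp
      qed
    qed
    then have "card (cells_containing \<D> x) \<le> 1" using card_mono[of "{Di}"] by fastforce
    with assms(1) show False unfolding two_cell_points_def by simp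
  qed
qed

lemma apollonius_edge_subset_bisector:
  assumes "finite \<D>" "Di \<in> \<D>" "apollonius_edge \<D> E" "E \<subseteq> apollonius_cell \<D> Di"
  obtains D where "D \<in> \<D>" "D \<noteq> Di" "E \<subseteq> bisector Di D"
proof -
  have E: "E \<in> components (two_cell_points \<D>)" using assms(3) unfolding apollonius_edge_def .
  obtain p where p: "p \<in> E" using in_components_nonempty[OF E] by blast
  have two_cell: "E \<subseteq> two_cell_points \<D>" using in_components_subset[OF E] .
  have "Di \<in> cells_containing \<D> p" "card (cells_containing \<D> p) = 2"
    using assms(2,4) two_cell p unfolding cells_containing_def two_cell_points_def by auto
  then obtain D where D: "D \<in> cells_containing \<D> p" "D \<noteq> Di"
    unfolding card_2_iff by (metis insert_iff)
  then have "D \<in> \<D>" unfolding cells_containing_def by simp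
  define U where "U = {x. \<forall>D'\<in>\<D> - {Di, D}. delta Di x < delta D' x}"
  have iff: "x \<in> bisector Di D \<longleftrightarrow> x \<in> U" if "x \<in> E" for x
    using two_cell_point_in_bisector_iff[OF _ _ assms(2) \<open>D \<in> \<D>\<close> D(2)] two_cell assms(4) that
    unfolding U_def by blast
  have "open U"
    unfolding U_def Collect_ball_eq using assms(1)
    by (intro open_INT ballI open_Collect_less continuous_on_delta) auto
  moreover have "open (- bisector Di D)"
    unfolding bisector_def Collect_neg_eq[symmetric]
    by (intro open_Collect_neq continuous_on_delta)
  moreover have "U \<inter> - bisector Di D \<inter> E = {}" "E \<subseteq> U \<union> - bisector Di D"
    using iff by auto
  ultimately have "U \<inter> E = {} \<or> - bisector Di D \<inter> E = {}"
    by (rule connectedD[OF in_components_connected[OF E]])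
  moreover have "p \<in> U \<inter> E"
  proof -
    have "delta Di p \<le> delta D p" using assms(4) p \<open>D \<in> \<D>\<close> unfolding apollonius_cell_def by auto
    moreover have "delta D p \<le> delta Di p"
      using D(1) assms(2) unfolding cells_containing_def apollonius_cell_def by auto
    ultimately have "p \<in> bisector Di D" unfolding bisector_def by simp
    then show ?thesis using iff[OF p] p by simp
  qed
  ultimately have "- bisector Di D \<inter> E = {}" by auto
  then have "E \<subseteq> bisector Di D" by auto
  then show ?thesis using that \<open>D \<in> \<D>\<close> D(2) by blast
qed

theorem corollary2:
  fixes \<D> :: "disk set" and Di :: disk and E :: "complex set"
    and p q :: complex and \<gamma> :: "real \<Rightarrow> complex"
  assumes "finite \<D>"
    and "\<forall>D\<in>\<D>. snd D \<ge> 0"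
    and "Di \<in> \<D>"
    and "apollonius_edge \<D> E"
    and "E \<subseteq> apollonius_cell \<D> Di"
    and "p \<in> E" and "q \<in> E"
    and "arc \<gamma>" and "pathstart \<gamma> = p" and "pathfinish \<gamma> = q"
    and "path_image \<gamma> \<subseteq> E"
  shows "path_image \<gamma> \<subseteq> cball (fst Di) (max (norm (p - fst Di)) (norm (q - fst Di)))"
proof -
  obtain D where "D \<noteq> Di" "E \<subseteq> bisector Di D"
    using apollonius_edge_subset_bisector[OF assms(1,3,4,5)] by blast
  with assms(11) have "path_image \<gamma> \<subseteq> bisector Di D" by blast
  from arc_in_bisector_subset_cball[OF \<open>D \<noteq> Di\<close> assms(8) this] show ?thesis
    using assms(9,10) by simp
qed

end
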